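(* Let $n>0$, $c>1$, and $k=\frac{cn}{c^2-1}$. Consider the algorithm in which each agent walks clockwise until it has travelled $k$ units of distance, and then (if rendezvous has not yet occurred) reverses and walks anti-clockwise forever. In the no-communication setting, for every initial placement of the two agents, they rendezvous by time $\frac{cn}{c^2-1}$. Hence the optimal rendezvous time without communication is exactly $\frac{cn}{c^2-1}$.
   Context: Model: the cycle is the continuous circle $\mathbb{R}/n\mathbb{Z}$ of length $n$; it is anonymous. Two agents $A$ and $B$ are placed by an adversary at arbitrary initial points and start at the same time. Both run the same deterministic algorithm; they are identical except that the slower agent $B$ has speed $1$ and the faster agent $A$ has speed $c>1$ (an agent does not know which one it is). Both know $n$ and $c$, share a sense of direction (clockwise vs. anti-clockwise), and have a pedometer measuring the distance they have travelled. Agents detect each other when they are at the same point (rendezvous). No-communication setting: the agents cannot observe anything other than the other agent being at their current location. The rendezvous time of an algorithm is the worst case, over all initial placements, of the time until the agents are co-located; the lower bound $\frac{cn}{c^2-1}$ on it holds for every algorithm in this setting. *)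

theory Defs
  imports Complex_Main
begin

text \<open>Points of the cycle R/nZ are represented by real numbers; two reals denote
  the same point of the cycle iff they differ by an integer multiple of n.\<close>
definition same_point :: "real \<Rightarrow> real \<Rightarrow> real \<Rightarrow> bool" where
  "same_point n x y \<longleftrightarrow> (\<exists>m::int. x - y = of_int m * n)"

text \<open>Displacement (clockwise = positive direction) at time t of an agent with speed v
  running the algorithm: walk clockwise until distance k has been travelled, then
  reverse and walk anti-clockwise forever.\<close>
definition walk_disp :: "real \<Rightarrow> real \<Rightarrow> real \<Rightarrow> real" where
  "walk_disp k v t = (if v * t \<le> k then v * t else 2 * k - v * t)"

definition agent_pos :: "real \<Rightarrow> real \<Rightarrow> real \<Rightarrow> real \<Rightarrow> real" where
  "agent_pos k v p t = p + walk_disp k v t"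

end

theory Submission
  imports Defs
begin

(* Let k be the turning distance.  The fast agent A (speed c)
   turns back at time k/c, the slow agent B (speed 1) at time k.  During the window
   k/c \<le> t \<le> k the agents walk towards each other, so the difference of their
   displacements, a - b + 2k - (c+1) t, is affine in t with slope -(c+1); across the
   window it sweeps an interval of length (c+1)(k - k/c) = (c^2-1) k / c.  Whenever
   this length is at least n, the difference passes through an integer multiple of n,
   i.e. the agents meet on the cycle R/nZ. *)

lemma multiple_in_interval:
  fixes n x :: real
  assumes "n > 0"
  obtains m :: int where "x - n < of_int m * n" and "of_int m * n \<le> x"
proof
  define m where "m = \<lfloor>x / n\<rfloor>"
  have "of_int m \<le> x / n" and "x / n < of_int m + 1"
    unfolding m_def by linarith+
  then show "of_int m * n \<le> x" and "x - n < of_int m * n"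
    using assms by (simp_all add: pos_le_divide_eq pos_divide_less_eq algebra_simps)
qed

lemma displacement_difference_in_window:
  assumes "k \<le> c * t" and "t \<le> k"
  shows "agent_pos k c a t - agent_pos k 1 b t = a - b + 2 * k - (c + 1) * t"
proof -
  have "walk_disp k c t = 2 * k - c * t"
    using assms(1) by (cases "c * t = k") (auto simp: walk_disp_def)
  moreover have "walk_disp k 1 t = t"
    using assms(2) by (simp add: walk_disp_def)
  ultimately show ?thesis
    by (simp add: agent_pos_def algebra_simps)
qed

lemma rendezvous_in_window:
  fixes n c k a b :: real
  assumes "n > 0" and "c > 1" and long: "n \<le> (c\<^sup>2 - 1) * k / c"
  shows "\<exists>t. k / c \<le> t \<and> t \<le> k \<and>
           same_point n (agent_pos k c a t) (agent_pos k 1 b t)"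
proof -
  have sweep: "(c + 1) * (k - k / c) = (c\<^sup>2 - 1) * k / c"
    using assms(2) by (simp add: field_simps power2_eq_square)
  define d where "d = a - b + k - k / c"
  obtain m :: int where lower: "d - n < of_int m * n" and upper: "of_int m * n \<le> d"
    using multiple_in_interval[OF assms(1)] .
  define t where "t = k / c + (d - of_int m * n) / (c + 1)"
  have shift: "(c + 1) * (t - k / c) = d - of_int m * n"
    using assms(2) by (simp add: t_def)
  have start: "k / c \<le> t"
    using upper assms(2) by (simp add: t_def)
  have "(c + 1) * (t - k / c) \<le> (c + 1) * (k - k / c)"
    using shift lower long sweep by linarith
  then have finish: "t \<le> k"
    using assms(2) by simp
  have "k \<le> c * t"
    using start assms(2) by (simp add: pos_divide_le_eq mult.commute)
  moreover have "(c + 1) * t = k + k / c + d - of_int m * n"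
    using shift assms(2) by (simp add: algebra_simps add_divide_distrib)
  ultimately have "agent_pos k c a t - agent_pos k 1 b t = of_int m * n"
    using finish by (simp add: displacement_difference_in_window d_def)
  then show ?thesis
    using start finish unfolding same_point_def by blast
qed

theorem theorem1:
  fixes n c a b :: real
  assumes "n > 0" and "c > 1"
  shows "\<exists>t. 0 \<le> t \<and> t \<le> c * n / (c\<^sup>2 - 1) \<and>
           same_point n (agent_pos (c * n / (c\<^sup>2 - 1)) c a t)
                        (agent_pos (c * n / (c\<^sup>2 - 1)) 1 b t)"
proof -
  define k where "k = c * n / (c\<^sup>2 - 1)"
  have "c\<^sup>2 - 1 > 0"
    using assms(2) by (simp add: one_less_power)
  then have "k > 0" and "(c\<^sup>2 - 1) * k / c = n"
    using assms unfolding k_def by (simp, simp add: less_imp_neq[symmetric])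
  then obtain t where "k / c \<le> t" "t \<le> k"
      "same_point n (agent_pos k c a t) (agent_pos k 1 b t)"
    using rendezvous_in_window[OF assms, of k] by auto
  moreover have "0 \<le> k / c"
    using \<open>k > 0\<close> assms(2) by simp
  ultimately show ?thesis
    unfolding k_def by (meson order_trans)
qed

end
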